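(* For every integer $d\ge 1$ there is a constant $c_d>0$ such that the following holds. Let $p\ge q\ge d+1$ be integers and let $\mathcal F$ be a family of $n\ge 2p$ compact convex sets in $\mathbb R^d$ satisfying the $(p,q)$-property. Then there is a point of $\mathbb R^d$ contained in at least $c_d\,\dfrac{q\,n}{p^{\frac{q-1}{q-d}}}$ members of $\mathcal F$.
   Context: A family $\mathcal F$ of sets satisfies the $(p,q)$-property if $|\mathcal F|\ge p$, no member is empty, and among any $p$ members there are $q$ with a common point. *)

theory Defs
  imports "HOL-Analysis.Analysis"
begin

definition pq_property :: "nat \<Rightarrow> nat \<Rightarrow> 'a set set \<Rightarrow> bool" where
  "pq_property p q F \<longleftrightarrow>
     card F \<ge> p \<and> finite F \<and> {} \<notin> F \<and>
     (\<forall>S\<subseteq>F. card S = p \<longrightarrow> (\<exists>T\<subseteq>S. card T = q \<and> \<Inter>T \<noteq> {}))"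

end

theory Submission
  imports Defs
begin

text \<open>
  Let \<open>D\<close> be the maximal depth of the family, \<open>d\<close> the dimension and \<open>k = q - d\<close>.
  By a Helly argument, every intersecting \<open>q\<close>-subfamily \<open>\<T>\<close> contains \<open>d\<close> members
  whose intersection has its point closest to the origin inside \<open>\<Inter>\<T>\<close>; so \<open>\<T>\<close> is
  determined by these \<open>d\<close> sets and by \<open>k\<close> sets through that point, and there are at
  most \<open>C(n,d) C(D,k)\<close> intersecting \<open>q\<close>-subfamilies. On the other hand the \<open>(p,q)\<close>-property
  forces at least \<open>p/q\<close> of them inside every \<open>2p\<close>-subfamily, and double counting gives
  at least \<open>p C(n,2p) / (q C(n-q,2p-q))\<close> of them. Comparing the two bounds and estimating
  the binomial coefficients yields \<open>D \<ge> c\<^sub>d q n / p\<^bsup>(q-1)/k\<^esup>\<close>.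
\<close>

section \<open>Closest points of intersections\<close>

lemma Helly_Inter_meets:
  fixes \<I> :: "'a::euclidean_space set set"
  assumes fin: "finite \<I>" and convex: "\<forall>K\<in>\<I>. convex K" "convex C"
    and big: "DIM('a) + 1 \<le> card \<I>" and ne: "\<Inter>\<I> \<noteq> {}"
    and meets: "\<And>K. K \<in> \<I> \<Longrightarrow> C \<inter> \<Inter>(\<I> - {K}) \<noteq> {}"
  shows "C \<inter> \<Inter>\<I> \<noteq> {}"
proof (cases "C \<in> \<I>")
  case True
  then show ?thesis
    using ne by blast
next
  case False
  then have card_insert: "card (insert C \<I>) = card \<I> + 1"
    using fin by simp
  have "\<Inter>(insert C \<I>) \<noteq> {}"
  proof (rule Helly)
    show "DIM('a) + 1 \<le> card (insert C \<I>)"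
      using card_insert big by simp
    show "\<forall>S\<in>insert C \<I>. convex S"
      using convex by blast
  next
    fix \<T> assume \<T>: "\<T> \<subseteq> insert C \<I>" "card \<T> = DIM('a) + 1"
    then have "\<T> \<noteq> insert C \<I>"
      using card_insert big by auto
    then obtain G where G: "G \<in> insert C \<I>" "G \<notin> \<T>"
      using \<T>(1) by blast
    show "\<Inter>\<T> \<noteq> {}"
    proof (cases "G = C")
      case True
      then have "\<T> \<subseteq> \<I>"
        using \<T>(1) G(2) by blast
      then show ?thesis
        using ne by blast
    next
      case False
      then have "G \<in> \<I>" "C \<inter> \<Inter>(\<I> - {G}) \<subseteq> \<Inter>\<T>"
        using \<T>(1) G by blast+
      then show ?thesis
        using meets by blast
    qed
  qed
  then show ?thesis
    by simp
qed

lemma closest_point_Inter_remove_one: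
  fixes \<I> :: "'a::euclidean_space set set"
  assumes fin: "finite \<I>" and cc: "\<forall>K\<in>\<I>. closed K \<and> convex K"
    and ne: "\<Inter>\<I> \<noteq> {}" and big: "DIM('a) + 1 \<le> card \<I>"
  shows "\<exists>K\<in>\<I>. closest_point (\<Inter>(\<I> - {K})) a = closest_point (\<Inter>\<I>) a"
proof (rule ccontr)
  assume moved: "\<not> ?thesis"
  define x where "x = closest_point (\<Inter>\<I>) a"
  have closed_convex: "closed (\<Inter>\<J>)" "convex (\<Inter>\<J>)" if "\<J> \<subseteq> \<I>" for \<J>
    using cc that by (auto intro!: closed_Inter convex_Inter)
  have x: "x \<in> \<Inter>\<I>"
    unfolding x_def using closest_point_in_set[OF _ ne] closed_convex by blast
  text \<open>If every removal moves the closest point, each \<open>\<I> - {K}\<close> meets the open ball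
    around \<open>a\<close> through \<open>x\<close>, and Helly puts a point of \<open>\<Inter>\<I>\<close> into that ball.\<close>
  have meets: "ball a (dist a x) \<inter> \<Inter>(\<I> - {K}) \<noteq> {}" if "K \<in> \<I>" for K
  proof -
    let ?S = "\<Inter>(\<I> - {K})"
    have S: "closed ?S" "convex ?S"
      using closed_convex[of "\<I> - {K}"] by auto
    have x_S: "x \<in> ?S" "x \<noteq> closest_point ?S a"
      using x moved that unfolding x_def by auto
    then have "closest_point ?S a \<in> ?S"
      using closest_point_in_set[OF S(1)] by blast
    moreover have "closest_point ?S a \<in> ball a (dist a x)"
      using closest_point_lt[OF S(2,1) x_S] by simp
    ultimately show ?thesis
      by blast
  qed
  have "\<forall>K\<in>\<I>. convex K"
    using cc by blast
  then have "ball a (dist a x) \<inter> \<Inter>\<I> \<noteq> {}"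
    using meets by (rule Helly_Inter_meets[OF fin _ convex_ball big ne])
  then obtain w where "w \<in> \<Inter>\<I>" "dist a w < dist a x"
    by auto
  then show False
    using closest_point_le[of "\<Inter>\<I>" w a] closed_convex[of \<I>] unfolding x_def by simp
qed

lemma closest_point_Inter_subfamily:
  fixes \<T> :: "'a::euclidean_space set set"
  assumes fin: "finite \<T>" and cc: "\<forall>K\<in>\<T>. closed K \<and> convex K"
    and ne: "\<Inter>\<T> \<noteq> {}" and big: "DIM('a) \<le> card \<T>"
  shows "\<exists>\<I>\<subseteq>\<T>. card \<I> = DIM('a) \<and> closest_point (\<Inter>\<I>) a \<in> \<Inter>\<T>"
proof -
  define P where "P \<I> \<longleftrightarrow> \<I> \<subseteq> \<T> \<and> DIM('a) \<le> card \<I> \<and> closest_point (\<Inter>\<I>) a \<in> \<Inter>\<T>"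
    for \<I>
  have "closed (\<Inter>\<T>)"
    using cc by (auto intro!: closed_Inter)
  then have "P \<T>"
    using closest_point_in_set[OF _ ne] big by (simp add: P_def)
  then obtain \<I> where \<I>: "P \<I>" and least: "\<And>\<J>. P \<J> \<Longrightarrow> card \<I> \<le> card \<J>"
    using ex_has_least_nat[of P \<T> card] by blast
  have "card \<I> = DIM('a)"
  proof (rule ccontr)
    assume "card \<I> \<noteq> DIM('a)"
    then have big_\<I>: "DIM('a) + 1 \<le> card \<I>"
      using \<I> by (simp add: P_def)
    have sub: "\<I> \<subseteq> \<T>" and cp: "closest_point (\<Inter>\<I>) a \<in> \<Inter>\<T>"
      using \<I> by (auto simp: P_def)
    have fin_\<I>: "finite \<I>"
      using sub fin finite_subset by blast
    have "\<Inter>\<I> \<noteq> {}"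
      using cp sub by blast
    then obtain K where K: "K \<in> \<I>"
      and same: "closest_point (\<Inter>(\<I> - {K})) a = closest_point (\<Inter>\<I>) a"
      using closest_point_Inter_remove_one[OF fin_\<I> _ _ big_\<I>] sub cc by blast
    have "card (\<I> - {K}) = card \<I> - 1"
      using fin_\<I> K by simp
    then have "P (\<I> - {K})"
      using sub cp same big_\<I> by (auto simp: P_def)
    then show False
      using least[of "\<I> - {K}"] card_Diff1_less[OF fin_\<I> K] by simp
  qed
  then show ?thesis
    using \<I> by (auto simp: P_def)
qed

section \<open>Counting subfamilies\<close>

lemma card_supersets_with_card:
  assumes fin: "finite F" and T: "T \<subseteq> F" "card T \<le> m"
  shows "card {S. S \<subseteq> F \<and> card S = m \<and> T \<subseteq> S} = (card F - card T) choose (m - card T)"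
proof -
  have fin_T: "finite T"
    using T fin finite_subset by blast
  have "bij_betw (\<lambda>S. S - T) {S. S \<subseteq> F \<and> card S = m \<and> T \<subseteq> S}
          {U. U \<subseteq> F - T \<and> card U = m - card T}"
  proof (rule bij_betw_byWitness[where f' = "\<lambda>U. U \<union> T"])
    show "(\<lambda>S. S - T) ` {S. S \<subseteq> F \<and> card S = m \<and> T \<subseteq> S} \<subseteq> {U. U \<subseteq> F - T \<and> card U = m - card T}"
      using fin fin_T by (auto simp: card_Diff_subset dest: finite_subset)
    show "(\<lambda>U. U \<union> T) ` {U. U \<subseteq> F - T \<and> card U = m - card T} \<subseteq> {S. S \<subseteq> F \<and> card S = m \<and> T \<subseteq> S}"
    proof (rule image_subsetI)
      fix U assume U: "U \<in> {U. U \<subseteq> F - T \<and> card U = m - card T}"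
      then have "card (U \<union> T) = card U + card T"
        using fin fin_T by (intro card_Un_disjoint) (auto dest: finite_subset)
      then show "U \<union> T \<in> {S. S \<subseteq> F \<and> card S = m \<and> T \<subseteq> S}"
        using U T by auto
    qed
  qed auto
  then have "card {S. S \<subseteq> F \<and> card S = m \<and> T \<subseteq> S} = card (F - T) choose (m - card T)"
    using fin by (simp add: bij_betw_same_card n_subsets)
  then show ?thesis
    using T fin_T by (simp add: card_Diff_subset)
qed

lemma sum_card_filter_swap:
  assumes "finite A" "finite B"
  shows "(\<Sum>x\<in>A. card {y\<in>B. R x y}) = (\<Sum>y\<in>B. card {x\<in>A. R x y})"
proof -
  have "(\<Sum>x\<in>A. card {y\<in>B. R x y}) = (\<Sum>x\<in>A. \<Sum>y\<in>B. if R x y then 1 else 0)"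
    using assms by (intro sum.cong refl) (simp flip: sum.inter_filter)
  also have "\<dots> = (\<Sum>y\<in>B. \<Sum>x\<in>A. if R x y then 1 else 0)"
    by (rule sum.swap)
  also have "\<dots> = (\<Sum>y\<in>B. card {x\<in>A. R x y})"
    using assms by (intro sum.cong refl) (simp flip: sum.inter_filter)
  finally show ?thesis .
qed

lemma card_le_by_core_split:
  assumes split: "\<And>T. T \<in> Q \<Longrightarrow> \<exists>I\<in>A. I \<subseteq> T \<and> T - I \<subseteq> B I \<and> card (T - I) = k"
    and fin_A: "finite A" and B: "\<And>I. I \<in> A \<Longrightarrow> finite (B I) \<and> card (B I) \<le> D"
  shows "card Q \<le> card A * (D choose k)"
proof -
  have "\<forall>T\<in>Q. \<exists>I. I \<in> A \<and> I \<subseteq> T \<and> T - I \<subseteq> B I \<and> card (T - I) = k"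
    using split by blast
  then obtain C where C: "\<forall>T\<in>Q. C T \<in> A \<and> C T \<subseteq> T \<and> T - C T \<subseteq> B (C T) \<and> card (T - C T) = k"
    by (auto dest!: bchoice)
  let ?S = "Sigma A (\<lambda>I. {J. J \<subseteq> B I \<and> card J = k})"
  have "inj_on (\<lambda>T. (C T, T - C T)) Q"
  proof (rule inj_onI)
    fix T T' assume "T \<in> Q" "T' \<in> Q" "(C T, T - C T) = (C T', T' - C T')"
    then show "T = T'"
      using C by (metis Diff_partition prod.inject)
  qed
  moreover have "(\<lambda>T. (C T, T - C T)) ` Q \<subseteq> ?S"
    using C by auto
  moreover have "finite ?S"
    using fin_A B by (intro finite_SigmaI) auto
  ultimately have "card Q \<le> card ?S"
    by (rule card_inj_on_le)
  also have "card ?S = (\<Sum>I\<in>A. card (B I) choose k)"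
    using fin_A B by (simp add: card_SigmaI n_subsets)
  also have "\<dots> \<le> (\<Sum>I\<in>A. D choose k)"
    using B by (intro sum_mono binomial_right_mono) auto
  finally show ?thesis by simp
qed

lemma card_members_within_Diff_less:
  assumes "finite Q" "T \<in> Q" "T \<subseteq> R" "T \<noteq> {}"
  shows "card {T'\<in>Q. T' \<subseteq> R - T} < card {T'\<in>Q. T' \<subseteq> R}"
proof (rule psubset_card_mono)
  show "finite {T'\<in>Q. T' \<subseteq> R}"
    using assms(1) by simp
  show "{T'\<in>Q. T' \<subseteq> R - T} \<subset> {T'\<in>Q. T' \<subseteq> R}"
    using assms(2-4) by blast
qed

text \<open>Greedy argument: remove from \<open>R\<close> a member of \<open>Q\<close> contained in it as long as at
  least \<open>p\<close> elements remain; each round removes \<open>q\<close> elements.\<close>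
lemma card_contained_members_ge:
  assumes fin: "finite F" and Q: "\<forall>T\<in>Q. T \<subseteq> F \<and> card T = q" and q: "1 \<le> q"
    and hit: "\<forall>S\<subseteq>F. card S = p \<longrightarrow> (\<exists>T\<in>Q. T \<subseteq> S)"
  shows "R \<subseteq> F \<Longrightarrow> p \<le> card R \<Longrightarrow> card R + 1 \<le> q * card {T\<in>Q. T \<subseteq> R} + p"
proof (induction "card R" arbitrary: R rule: less_induct)
  case less
  have fin_Q: "finite Q"
    using Q fin by (intro finite_subset[of Q "Pow F"]) auto
  have fin_R: "finite R"
    using less(2) fin finite_subset by blast
  obtain S where S: "S \<subseteq> R" "card S = p"
    using obtain_subset_with_card_n[OF less(3)] by blast
  have "S \<subseteq> F"
    using S(1) less(2) by (rule order_trans)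
  then obtain T where T: "T \<in> Q" "T \<subseteq> R"
    using hit S by blast
  have card_T: "card T = q"
    using Q T(1) by blast
  have card_R_T: "card (R - T) = card R - q"
    using card_Diff_subset[OF finite_subset[OF T(2) fin_R] T(2)] card_T by simp
  have "q \<le> card R"
    using card_mono[OF fin_R T(2)] card_T by simp
  have "T \<noteq> {}"
    using card_T q by auto
  then have fewer: "card {T'\<in>Q. T' \<subseteq> R - T} < card {T'\<in>Q. T' \<subseteq> R}"
    by (rule card_members_within_Diff_less[OF fin_Q T])
  show ?case
  proof (cases "p \<le> card (R - T)")
    case True
    have "card (R - T) < card R"
      using card_R_T \<open>q \<le> card R\<close> q by linarith
    moreover have "R - T \<subseteq> F"
      using less(2) by blast
    ultimately have IH: "card (R - T) + 1 \<le> q * card {T'\<in>Q. T' \<subseteq> R - T} + p"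
      using True by (rule less(1))
    have "q * (card {T'\<in>Q. T' \<subseteq> R - T} + 1) \<le> q * card {T'\<in>Q. T' \<subseteq> R}"
      using fewer by (intro mult_le_mono2) simp
    then have "q * card {T'\<in>Q. T' \<subseteq> R - T} + q \<le> q * card {T'\<in>Q. T' \<subseteq> R}"
      by (simp add: algebra_simps)
    then show ?thesis
      using IH card_R_T \<open>q \<le> card R\<close> by linarith
  next
    case False
    have "q * 1 \<le> q * card {T'\<in>Q. T' \<subseteq> R}"
      using fewer by (intro mult_le_mono2) simp
    then show ?thesis
      using False card_R_T by linarith
  qed
qed

section \<open>Depth and intersecting subfamilies\<close>

definition depth :: "'a set set \<Rightarrow> 'a \<Rightarrow> nat" where
  "depth \<F> x = card {K\<in>\<F>. x \<in> K}"

definition intersecting_subfamilies :: "nat \<Rightarrow> 'a set set \<Rightarrow> 'a set set set" where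
  "intersecting_subfamilies q \<F> = {\<T>. \<T> \<subseteq> \<F> \<and> card \<T> = q \<and> \<Inter>\<T> \<noteq> {}}"

lemma depth_attains_max:
  assumes "finite \<F>"
  shows "\<exists>x\<^sub>0. \<forall>x. depth \<F> x \<le> depth \<F> x\<^sub>0"
proof -
  have "depth \<F> x \<le> card \<F>" for x
    unfolding depth_def using assms by (intro card_mono) auto
  then have "range (depth \<F>) \<subseteq> {..card \<F>}"
    by auto
  then have fin: "finite (range (depth \<F>))"
    by (rule finite_subset) simp
  have "Max (range (depth \<F>)) \<in> range (depth \<F>)"
    using fin by (rule Max_in) simp
  then obtain x\<^sub>0 where x\<^sub>0: "Max (range (depth \<F>)) = depth \<F> x\<^sub>0"
    by blast
  have "depth \<F> x \<le> depth \<F> x\<^sub>0" for x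
    using Max_ge[OF fin, of "depth \<F> x"] x\<^sub>0 by simp
  then show ?thesis
    by blast
qed

lemma card_intersecting_subfamilies_le:
  fixes \<F> :: "'a::euclidean_space set set"
  assumes fin: "finite \<F>" and cc: "\<forall>K\<in>\<F>. closed K \<and> convex K" and q: "DIM('a) \<le> q"
    and depth: "\<forall>x. depth \<F> x \<le> D"
  shows "card (intersecting_subfamilies q \<F>) \<le> (card \<F> choose DIM('a)) * (D choose (q - DIM('a)))"
proof -
  have "card (intersecting_subfamilies q \<F>)
      \<le> card {\<I>. \<I> \<subseteq> \<F> \<and> card \<I> = DIM('a)} * (D choose (q - DIM('a)))"
  proof (rule card_le_by_core_split[where B = "\<lambda>\<I>. {K\<in>\<F>. closest_point (\<Inter>\<I>) 0 \<in> K}"])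
    fix \<T> assume "\<T> \<in> intersecting_subfamilies q \<F>"
    then have \<T>: "\<T> \<subseteq> \<F>" "card \<T> = q" "\<Inter>\<T> \<noteq> {}"
      by (simp_all add: intersecting_subfamilies_def)
    then have fin_\<T>: "finite \<T>"
      using fin finite_subset by blast
    moreover have "\<forall>K\<in>\<T>. closed K \<and> convex K"
      using cc \<T>(1) by blast
    ultimately obtain \<I> where \<I>: "\<I> \<subseteq> \<T>" "card \<I> = DIM('a)" "closest_point (\<Inter>\<I>) 0 \<in> \<Inter>\<T>"
      using closest_point_Inter_subfamily[of \<T> 0] \<T>(2,3) q by auto
    have "card (\<T> - \<I>) = q - DIM('a)"
      using card_Diff_subset[OF finite_subset[OF \<I>(1) fin_\<T>] \<I>(1)] \<T>(2) \<I>(2) by simp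
    then show "\<exists>\<I>\<in>{\<I>. \<I> \<subseteq> \<F> \<and> card \<I> = DIM('a)}. \<I> \<subseteq> \<T> \<and>
        \<T> - \<I> \<subseteq> {K\<in>\<F>. closest_point (\<Inter>\<I>) 0 \<in> K} \<and> card (\<T> - \<I>) = q - DIM('a)"
      using \<I> \<T>(1) by blast
  next
    fix \<I>
    show "finite {K\<in>\<F>. closest_point (\<Inter>\<I>) 0 \<in> K} \<and> card {K\<in>\<F>. closest_point (\<Inter>\<I>) 0 \<in> K} \<le> D"
      using fin depth by (simp add: depth_def)
  qed (use fin in simp)
  then show ?thesis
    using fin by (simp add: n_subsets)
qed

lemma pq_property_card_intersecting_subfamilies_ge:
  assumes pq: "pq_property p q \<F>" and q: "1 \<le> q" "q \<le> p" and m: "p \<le> m"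
  shows "(m + 1 - p) * (card \<F> choose m)
           \<le> q * card (intersecting_subfamilies q \<F>) * ((card \<F> - q) choose (m - q))"
proof -
  define Q where "Q = intersecting_subfamilies q \<F>"
  define M where "M = {S. S \<subseteq> \<F> \<and> card S = m}"
  have fin: "finite \<F>"
    using pq by (simp add: pq_property_def)
  have "Q \<subseteq> Pow \<F>" "M \<subseteq> Pow \<F>"
    by (auto simp: Q_def M_def intersecting_subfamilies_def)
  then have fin_Q: "finite Q" and fin_M: "finite M"
    using finite_Pow_iff[of \<F>] fin by (blast intro: finite_subset)+
  have Q: "\<forall>T\<in>Q. T \<subseteq> \<F> \<and> card T = q"
    by (simp add: Q_def intersecting_subfamilies_def)
  have hit: "\<forall>S\<subseteq>\<F>. card S = p \<longrightarrow> (\<exists>T\<in>Q. T \<subseteq> S)"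
  proof (intro allI impI)
    fix S assume S: "S \<subseteq> \<F>" "card S = p"
    then obtain T where "T \<subseteq> S" "card T = q" "\<Inter>T \<noteq> {}"
      using pq unfolding pq_property_def by blast
    then show "\<exists>T\<in>Q. T \<subseteq> S"
      using S unfolding Q_def intersecting_subfamilies_def by blast
  qed
  have "(m + 1 - p) * card M = (\<Sum>S\<in>M. m + 1 - p)"
    by simp
  also have "\<dots> \<le> (\<Sum>S\<in>M. q * card {T\<in>Q. T \<subseteq> S})"
  proof (rule sum_mono)
    fix S assume "S \<in> M"
    then have S: "S \<subseteq> \<F>" "card S = m"
      by (simp_all add: M_def)
    then have "card S + 1 \<le> q * card {T\<in>Q. T \<subseteq> S} + p"
      using card_contained_members_ge[OF fin Q q(1) hit S(1)] m by simp
    then show "m + 1 - p \<le> q * card {T\<in>Q. T \<subseteq> S}"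
      using S(2) by linarith
  qed
  also have "\<dots> = q * (\<Sum>S\<in>M. card {T\<in>Q. T \<subseteq> S})"
    by (simp add: sum_distrib_left)
  also have "(\<Sum>S\<in>M. card {T\<in>Q. T \<subseteq> S}) = (\<Sum>T\<in>Q. card {S\<in>M. T \<subseteq> S})"
    by (rule sum_card_filter_swap[OF fin_M fin_Q])
  also have "\<dots> = (\<Sum>T\<in>Q. (card \<F> - q) choose (m - q))"
  proof (rule sum.cong[OF refl])
    fix T assume "T \<in> Q"
    then have T: "T \<subseteq> \<F>" "card T = q"
      using Q by blast+
    have "{S\<in>M. T \<subseteq> S} = {S. S \<subseteq> \<F> \<and> card S = m \<and> T \<subseteq> S}"
      by (auto simp: M_def)
    then show "card {S\<in>M. T \<subseteq> S} = (card \<F> - q) choose (m - q)"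
      using card_supersets_with_card[OF fin T(1)] T(2) q m by simp
  qed
  also have "\<dots> = card Q * ((card \<F> - q) choose (m - q))"
    by simp
  finally show ?thesis
    using fin by (simp add: M_def Q_def n_subsets mult.assoc)
qed

section \<open>Binomial estimates\<close>

lemma choose_mult_nested:
  assumes "d + k \<le> m" "m \<le> n"
  shows "(n choose m) * (m choose d) * ((m - d) choose k)
           = (n choose d) * ((n - d) choose k) * ((n - (d + k)) choose (m - (d + k)))"
proof -
  have "(m choose d) * ((m - d) choose k) = (m choose (d + k)) * ((d + k) choose d)"
    using choose_mult[of d "d + k" m] assms by simp
  moreover have "(n choose m) * (m choose (d + k)) = (n choose (d + k)) * ((n - (d + k)) choose (m - (d + k)))"
    using choose_mult[of "d + k" m n] assms by simp
  moreover have "(n choose (d + k)) * ((d + k) choose d) = (n choose d) * ((n - d) choose k)"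
    using choose_mult[of d "d + k" n] assms by simp
  ultimately show ?thesis
    by (metis mult.assoc mult.commute)
qed

lemma choose_inequality_of_subfamily_bounds:
  fixes n m p q d k N D :: nat
  assumes qdk: "q = d + k" and "q \<le> m" "m \<le> n"
    and lower: "p * (n choose m) \<le> q * N * ((n - q) choose (m - q))"
    and upper: "N \<le> (n choose d) * (D choose k)"
  shows "p * ((n - d) choose k) \<le> q * (D choose k) * (m choose d) * ((m - d) choose k)"
proof -
  define X where "X = (n choose d) * ((n - q) choose (m - q))"
  have "X > 0"
    using assms by (simp add: X_def zero_less_binomial)
  have "X * (p * ((n - d) choose k)) = p * (n choose m) * ((m choose d) * ((m - d) choose k))"
    using choose_mult_nested[of d k m n] assms by (simp add: X_def ac_simps)
  also have "\<dots> \<le> q * N * ((n - q) choose (m - q)) * ((m choose d) * ((m - d) choose k))"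
    using lower by (rule mult_le_mono1)
  also have "\<dots> \<le> q * ((n choose d) * (D choose k)) * ((n - q) choose (m - q)) * ((m choose d) * ((m - d) choose k))"
    using upper by (intro mult_le_mono1 mult_le_mono2)
  also have "\<dots> = X * (q * (D choose k) * (m choose d) * ((m - d) choose k))"
    by (simp add: X_def ac_simps)
  finally show ?thesis
    using \<open>X > 0\<close> by simp
qed

lemma self_power_le_three_power_fact: "real k ^ k \<le> 3 ^ k * fact k"
proof -
  have "(\<Sum>n\<in>{k}. inverse (fact n) * real k ^ n) \<le> (\<Sum>n. inverse (fact n) * real k ^ n)"
    by (rule sum_le_suminf[OF summable_exp]) auto
  then have "inverse (fact k) * real k ^ k \<le> (\<Sum>n. inverse (fact n) * real k ^ n)"
    by simp
  also have "\<dots> = exp (real k)"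
    by (simp add: exp_def)
  also have "\<dots> = exp 1 ^ k"
    using exp_of_nat_mult[of k 1] by simp
  also have "\<dots> \<le> 3 ^ k"
    by (intro power_mono exp_le) auto
  finally show ?thesis
    by (simp add: field_simps)
qed

lemma binomial_fact_le_power: "real (m choose k) * fact k \<le> real m ^ k"
proof -
  have "real ((m choose k) * fact k) \<le> real (m ^ k)"
    using binomial_fact_pow by (simp only: of_nat_le_iff)
  then show ?thesis
    by simp
qed

lemma power_le_three_power_fact_binomial:
  assumes "k \<le> m"
  shows "real m ^ k \<le> 3 ^ k * fact k * real (m choose k)"
proof (cases "k = 0")
  case False
  have "real m ^ k = real k ^ k * (real m / real k) ^ k"
    using False by (simp add: power_divide)
  also have "\<dots> \<le> 3 ^ k * fact k * real (m choose k)"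
    using self_power_le_three_power_fact binomial_ge_n_over_k_pow_k[OF assms]
    by (intro mult_mono) auto
  finally show ?thesis .
qed simp

lemma power_le_six_power_fact_binomial:
  assumes "2 * d \<le> n" "k \<le> n - d"
  shows "real n ^ k \<le> 6 ^ k * fact k * real ((n - d) choose k)"
proof -
  have "real n \<le> 2 * real (n - d)"
    using assms(1) by simp
  then have "real n ^ k \<le> 2 ^ k * real (n - d) ^ k"
    by (metis power_mono power_mult_distrib of_nat_0_le_iff)
  also have "\<dots> \<le> 2 ^ k * (3 ^ k * fact k * real ((n - d) choose k))"
    using power_le_three_power_fact_binomial[OF assms(2)] by (intro mult_left_mono) auto
  finally have "real n ^ k \<le> (2 ^ k * 3 ^ k) * fact k * real ((n - d) choose k)"
    by (simp only: mult.assoc)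
  then show ?thesis
    using power_mult_distrib[of "2::real" 3 k] by simp
qed

lemma power_times_exponent_le:
  fixes x :: real
  assumes "0 \<le> x" "x \<le> 1/2" "1 \<le> k"
  shows "x ^ k * k \<le> x"
  using assms(3)
proof (induction k rule: dec_induct)
  case (step k)
  have "x ^ Suc k * real (Suc k) = x * (x ^ k * k + x ^ k)"
    by (simp add: algebra_simps)
  also have "\<dots> \<le> x * (x + x)"
    using step power_decreasing[of 1 k x] assms by (intro mult_left_mono add_mono) auto
  also have "\<dots> \<le> x"
    using assms by (simp add: mult_left_le)
  finally show ?case .
qed simp

text \<open>The constant makes \<open>36 c\<^sub>d (d + 1) = 1 / (2 (d + 1) 2\<^sup>d) \<le> 1/2\<close>, which absorbs
  both \<open>q \<le> (d + 1) k\<close> and \<open>k\<^sup>k \<le> 3\<^sup>k k!\<close> in the final estimate.\<close>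
definition pq_constant :: "nat \<Rightarrow> real" where
  "pq_constant d = 1 / (72 * (real d + 1)^2 * 2^d)"

lemma pq_constant_pos: "pq_constant d > 0"
  by (simp add: pq_constant_def)

lemma pq_constant_power_le_fact:
  assumes k: "1 \<le> k" and q: "q = d + k"
  shows "(6 * pq_constant d * q) ^ k * q * 2 ^ q \<le> fact k"
proof -
  define c where "c = pq_constant d"
  define x where "x = 1 / (2 * ((real d + 1) * 2 ^ d))"
  have c0: "0 \<le> c"
    using pq_constant_pos[of d] by (simp add: c_def)
  have x_eq: "12 * c * (real d + 1) * 3 = x"
    by (simp add: c_def x_def pq_constant_def power2_eq_square)
  have "1 * 1 \<le> (real d + 1) * 2 ^ d"
    by (intro mult_mono) auto
  then have "2 \<le> 2 * ((real d + 1) * 2 ^ d)"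
    by linarith
  then have x: "0 \<le> x" "x \<le> 1/2"
    unfolding x_def by (auto intro: divide_left_mono)
  have "real d * 1 \<le> real d * real k"
    using k by (intro mult_left_mono) auto
  then have q_le: "real q \<le> (real d + 1) * k"
    using q by (simp add: distrib_right)
  have "12 * c * q = (6 * c * q) * 2"
    by simp
  then have "(12 * c * q) ^ k = (6 * c * q) ^ k * 2 ^ k"
    by (simp only: power_mult_distrib)
  then have "(6 * c * q) ^ k * q * 2 ^ q = (12 * c * q) ^ k * q * 2 ^ d"
    by (simp add: q power_add)
  also have "\<dots> \<le> (12 * c * ((real d + 1) * k)) ^ k * ((real d + 1) * k) * 2 ^ d"
    using q_le c0 by (intro mult_right_mono mult_mono power_mono) auto
  also have "\<dots> = (12 * c * (real d + 1)) ^ k * real k ^ k * ((real d + 1) * k) * 2 ^ d"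
    by (simp add: power_mult_distrib)
  also have "\<dots> \<le> (12 * c * (real d + 1)) ^ k * (3 ^ k * fact k) * ((real d + 1) * k) * 2 ^ d"
    using self_power_le_three_power_fact[of k] c0
    by (intro mult_right_mono mult_left_mono) auto
  also have "\<dots> = (x ^ k * k) * ((real d + 1) * 2 ^ d) * fact k"
    unfolding x_eq[symmetric] power_mult_distrib by (simp only: mult_ac)
  also have "\<dots> \<le> x * ((real d + 1) * 2 ^ d) * fact k"
    using power_times_exponent_le[OF x k] by (intro mult_right_mono) auto
  also have "\<dots> \<le> fact k"
    by (simp add: x_def)
  finally show ?thesis
    by (simp add: c_def)
qed

lemma power_bound_of_choose_inequality:
  fixes n p q d k D :: nat
  assumes qdk: "q = d + k" and "q \<le> p" "2 * p \<le> n"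
    and main: "p * ((n - d) choose k) \<le> q * (D choose k) * ((2 * p) choose d) * ((2 * p - d) choose k)"
  shows "real p * real n ^ k * fact k \<le> 6 ^ k * real q * real D ^ k * 2 ^ q * real p ^ q"
proof -
  have n_bound: "real n ^ k \<le> 6 ^ k * fact k * real ((n - d) choose k)"
    using assms by (intro power_le_six_power_fact_binomial) auto
  have D_bound: "real (D choose k) * fact k \<le> real D ^ k"
    by (rule binomial_fact_le_power)
  have "real ((2 * p) choose d) \<le> real ((2 * p) ^ d)"
    using binomial_le_pow[of d "2 * p"] assms by (simp only: of_nat_le_iff)
  then have p_bound_d: "real ((2 * p) choose d) \<le> (2 * real p) ^ d"
    by simp
  have "real ((2 * p - d) choose k) * fact k \<le> real (2 * p - d) ^ k"
    by (rule binomial_fact_le_power)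
  also have "\<dots> \<le> (2 * real p) ^ k"
    by (intro power_mono) auto
  finally have p_bound_k: "real ((2 * p - d) choose k) * fact k \<le> (2 * real p) ^ k" .
  have main_real: "real (p * ((n - d) choose k))
      \<le> real (q * (D choose k) * ((2 * p) choose d) * ((2 * p - d) choose k))"
    using main by (simp only: of_nat_le_iff)
  have "real p * real n ^ k \<le> real p * (6 ^ k * fact k * real ((n - d) choose k))"
    using n_bound by (rule mult_left_mono) simp
  then have "real p * real n ^ k * (fact k * fact k)
      \<le> real p * (6 ^ k * fact k * real ((n - d) choose k)) * (fact k * fact k)"
    by (rule mult_right_mono) simp
  also have "\<dots> = 6 ^ k * fact k * (fact k * fact k) * real (p * ((n - d) choose k))"
    by (simp add: ac_simps)
  also have "\<dots> \<le> 6 ^ k * fact k * (fact k * fact k)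
      * real (q * (D choose k) * ((2 * p) choose d) * ((2 * p - d) choose k))"
    using main_real by (rule mult_left_mono) simp
  also have "\<dots> = 6 ^ k * fact k * real q * (real (D choose k) * fact k) * real ((2 * p) choose d)
                    * (real ((2 * p - d) choose k) * fact k)"
    by (simp add: ac_simps)
  also have "\<dots> \<le> 6 ^ k * fact k * real q * real D ^ k * (2 * real p) ^ d * (2 * real p) ^ k"
    using D_bound p_bound_d p_bound_k by (intro mult_mono mult_left_mono) auto
  also have "\<dots> = fact k * (6 ^ k * real q * real D ^ k * 2 ^ q * real p ^ q)"
    by (simp add: qdk power_add power_mult_distrib ac_simps)
  finally have "fact k * (real p * real n ^ k * fact k) \<le> fact k * (6 ^ k * real q * real D ^ k * 2 ^ q * real p ^ q)"
    by (simp add: ac_simps)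
  then show ?thesis
    by simp
qed

lemma divide_powr_le_of_power_le:
  fixes a b D :: real
  assumes "0 < a" "0 \<le> b" "0 \<le> D" "0 < k" and le: "b ^ k \<le> D ^ k * a ^ m"
  shows "b / a powr (real m / real k) \<le> D"
proof -
  have "(a powr (real m / real k)) ^ k = a ^ m"
    using assms by (simp add: powr_realpow[symmetric] powr_powr)
  then have "(b / a powr (real m / real k)) ^ k = b ^ k / a ^ m"
    by (simp add: power_divide)
  also have "\<dots> \<le> D ^ k"
    using le \<open>0 < a\<close> by (simp add: divide_le_eq)
  finally show ?thesis
    using power_le_imp_le_base[of _ "k - 1" D] assms by simp
qed

lemma depth_bound_of_choose_inequality:
  fixes n p q d k D :: nat
  assumes qdk: "q = d + k" and k: "1 \<le> k" and "q \<le> p" "2 * p \<le> n"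
    and main: "p * ((n - d) choose k) \<le> q * (D choose k) * ((2 * p) choose d) * ((2 * p - d) choose k)"
  shows "pq_constant d * q * n / p powr (real (q - 1) / real k) \<le> D"
proof -
  define c where "c = pq_constant d"
  have p: "0 < p"
    using assms by simp
  have "6 ^ k * real q * 2 ^ q * ((c * q * n) ^ k * p) = ((6 * c * q) ^ k * q * 2 ^ q) * (real p * real n ^ k)"
    by (simp add: power_mult_distrib ac_simps)
  also have "\<dots> \<le> fact k * (real p * real n ^ k)"
    using pq_constant_power_le_fact[OF k qdk] by (intro mult_right_mono) (auto simp: c_def)
  also have "\<dots> \<le> 6 ^ k * real q * 2 ^ q * (real D ^ k * real p ^ q)"
    using power_bound_of_choose_inequality[OF qdk assms(3,4) main] by (simp add: ac_simps)
  finally have "(c * q * n) ^ k * p \<le> real D ^ k * real p ^ q"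
    using qdk k by (simp add: mult_le_cancel_left_pos)
  also have "real p ^ q = real p ^ (q - 1) * p"
    using qdk k by (simp add: power_Suc2[symmetric] del: power_Suc2)
  finally have "(c * q * n) ^ k \<le> real D ^ k * real p ^ (q - 1)"
    using p by (simp add: mult.assoc)
  then show ?thesis
    using divide_powr_le_of_power_le[of p "c * q * n" D k "q - 1"] p k pq_constant_pos[of d]
    by (simp add: c_def)
qed

theorem proposition2p3:
  "\<exists>c::real. c > 0 \<and>
     (\<forall>(p::nat) (q::nat) (n::nat) (F :: (real^'d) set set).
        p \<ge> q \<and> q \<ge> CARD('d) + 1 \<and> finite F \<and> card F = n \<and> n \<ge> 2 * p \<and>
        (\<forall>K\<in>F. compact K \<and> convex K) \<and> pq_property p q F \<longrightarrow>
        (\<exists>x::real^'d. real (card {K\<in>F. x \<in> K}) \<ge>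
            c * real q * real n / (real p powr (real (q - 1) / real (q - CARD('d))))))"
proof (rule exI[of _ "pq_constant CARD('d)"], intro conjI allI impI)
  define d where "d = CARD('d)"
  show "pq_constant CARD('d) > 0"
    by (rule pq_constant_pos)
  fix p q n :: nat and F :: "(real^'d) set set"
  assume "q \<le> p \<and> CARD('d) + 1 \<le> q \<and> finite F \<and> card F = n \<and> 2 * p \<le> n \<and>
      (\<forall>K\<in>F. compact K \<and> convex K) \<and> pq_property p q F"
  then have pq: "q \<le> p" and qd: "d + 1 \<le> q" and fin: "finite F" and n: "card F = n" "2 * p \<le> n"
    and cc: "\<forall>K\<in>F. closed K \<and> convex K" and pq_F: "pq_property p q F"
    by (auto simp: d_def compact_imp_closed)
  obtain x\<^sub>0 where x\<^sub>0: "\<forall>x. depth F x \<le> depth F x\<^sub>0"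
    using depth_attains_max[OF fin] by blast
  have upper: "card (intersecting_subfamilies q F) \<le> (n choose d) * (depth F x\<^sub>0 choose (q - d))"
    using card_intersecting_subfamilies_le[OF fin cc _ x\<^sub>0] qd n by (simp add: d_def)
  have "p * (n choose (2 * p)) \<le> (2 * p + 1 - p) * (n choose (2 * p))"
    by simp
  also have "\<dots> \<le> q * card (intersecting_subfamilies q F) * ((n - q) choose (2 * p - q))"
    using pq_property_card_intersecting_subfamilies_ge[OF pq_F _ pq, of "2 * p"] qd n by simp
  finally have "p * ((n - d) choose (q - d))
      \<le> q * (depth F x\<^sub>0 choose (q - d)) * ((2 * p) choose d) * ((2 * p - d) choose (q - d))"
    using choose_inequality_of_subfamily_bounds[OF _ _ _ _ upper] qd pq n by simp
  then have "pq_constant d * q * n / p powr (real (q - 1) / real (q - d)) \<le> depth F x\<^sub>0"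
    using depth_bound_of_choose_inequality[of q d "q - d" p n] qd pq n by simp
  then show "\<exists>x. pq_constant CARD('d) * q * n / p powr (real (q - 1) / real (q - CARD('d)))
      \<le> real (card {K\<in>F. x \<in> K})"
    by (auto simp: depth_def d_def)
qed

end
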